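(* Let $\mathcal U$ be a non-principal ultrafilter on $\mathbb N$ and let $\mathcal A$ be a unital Banach algebra which is not isomorphic to $\mathbb C$. Then the following are equivalent: (1) the ultrapower $(\mathcal A)_{\mathcal U}$ is purely infinite; (2) there is $K>0$ such that $C_{\mathrm{pi}}^{\mathcal A}(a)<K$ for every $a\in\mathcal A$ with $\|a\|=1$.
   Context: A complex unital algebra $\mathcal B$ is purely infinite if it is not a division algebra and for every non-zero $a\in\mathcal B$ there exist $b,c\in\mathcal B$ with $bac=1_{\mathcal B}$. For a unital Banach algebra $\mathcal A$ and non-zero $a\in\mathcal A$, $C_{\mathrm{pi}}^{\mathcal A}(a)=\inf\{\|b\|\|c\|: b,c\in\mathcal A,\ bac=1\}$, with $C_{\mathrm{pi}}^{\mathcal A}(a)=\infty$ if no such $b,c$ exist. For an ultrafilter $\mathcal U$ on $\mathbb N$, the ultrapower is $(\mathcal A)_{\mathcal U}=\ell^\infty(\mathcal A)/c_{\mathcal U}(\mathcal A)$, where $\ell^\infty(\mathcal A)$ is the Banach algebra of bounded sequences in $\mathcal A$ with pointwise operations and sup norm, and $c_{\mathcal U}(\mathcal A)$ is the closed ideal of sequences $(a_n)$ with $\lim_{n\to\mathcal U}\|a_n\|=0$; the quotient norm satisfies $\|\pi((a_n))\|=\lim_{n\to\mathcal U}\|a_n\|$. *)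

theory Defs
  imports "HOL-Analysis.Analysis" "HOL-Library.Extended_Real"
begin

definition ultrafilter_nat :: "nat filter \<Rightarrow> bool" where
  "ultrafilter_nat U \<longleftrightarrow> U \<noteq> bot \<and> (\<forall>P. eventually P U \<or> eventually (\<lambda>n. \<not> P n) U)"

definition nonprincipal :: "nat filter \<Rightarrow> bool" where
  "nonprincipal U \<longleftrightarrow> (\<forall>k. \<not> eventually (\<lambda>n. n = k) U)"

text \<open>The underlying type carries the real Banach algebra structure with unit of norm 1
  (class real_normed_algebra_1 and banach); cmult is the complex scalar multiplication,
  compatible with the real one, with the algebra structure and with the norm.\<close>

definition complex_banach_algebra :: "(complex \<Rightarrow> 'a::{real_normed_algebra_1,banach} \<Rightarrow> 'a) \<Rightarrow> bool" where
  "complex_banach_algebra cmult \<longleftrightarrow>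
     (\<forall>r x. cmult (complex_of_real r) x = scaleR r x) \<and>
     (\<forall>x. cmult 1 x = x) \<and>
     (\<forall>z w x. cmult (z * w) x = cmult z (cmult w x)) \<and>
     (\<forall>z w x. cmult (z + w) x = cmult z x + cmult w x) \<and>
     (\<forall>z x y. cmult z (x + y) = cmult z x + cmult z y) \<and>
     (\<forall>z x y. cmult z (x * y) = cmult z x * y) \<and>
     (\<forall>z x y. cmult z (x * y) = x * cmult z y) \<and>
     (\<forall>z x. norm (cmult z x) = cmod z * norm x)"

definition iso_to_complex :: "(complex \<Rightarrow> 'a::{real_normed_algebra_1,banach} \<Rightarrow> 'a) \<Rightarrow> bool" where
  "iso_to_complex cmult \<longleftrightarrow>
     (\<exists>\<phi> :: 'a \<Rightarrow> complex. bij \<phi> \<and>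
        (\<forall>x y. \<phi> (x + y) = \<phi> x + \<phi> y) \<and>
        (\<forall>z x. \<phi> (cmult z x) = z * \<phi> x) \<and>
        (\<forall>x y. \<phi> (x * y) = \<phi> x * \<phi> y) \<and>
        \<phi> 1 = 1)"

definition C_pi :: "'a::real_normed_algebra_1 \<Rightarrow> ereal" where
  "C_pi a = (INF bc \<in> {(b, c). b * a * c = 1}. ereal (norm (fst bc) * norm (snd bc)))"
  \<comment> \<open>the infimum of the empty set of extended reals is \<infinity>\<close>

text \<open>The ultrapower is the quotient algebra; its elements are
  represented by bounded sequences, and x = y in the quotient iff x - y is in c_U(A).\<close>

definition linf :: "(nat \<Rightarrow> 'a::real_normed_vector) set" where
  "linf = {f. bounded (range f)}"

definition cU :: "nat filter \<Rightarrow> (nat \<Rightarrow> 'a::real_normed_vector) set" where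
  "cU U = {f \<in> linf. ((\<lambda>n. norm (f n)) \<longlongrightarrow> 0) U}"

text \<open>Purely infinite for the quotient algebra ell^infinity(A) / c_U(A):
  it is not a division algebra (a division algebra being a nonzero unital algebra in which
  every nonzero element is invertible), and every nonzero element a admits b, c with b a c = 1.\<close>

definition ultrapower_division_algebra :: "nat filter \<Rightarrow> 'a::real_normed_algebra_1 itself \<Rightarrow> bool" where
  "ultrapower_division_algebra U _ \<longleftrightarrow>
     (\<lambda>n. 1 :: 'a) \<notin> cU U \<and>
     (\<forall>a \<in> (linf :: (nat \<Rightarrow> 'a) set). a \<notin> cU U \<longrightarrow>
        (\<exists>b \<in> linf. (\<lambda>n. a n * b n - 1) \<in> cU U \<and> (\<lambda>n. b n * a n - 1) \<in> cU U))"

definition ultrapower_purely_infinite :: "nat filter \<Rightarrow> 'a::real_normed_algebra_1 itself \<Rightarrow> bool" where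
  "ultrapower_purely_infinite U T \<longleftrightarrow>
     \<not> ultrapower_division_algebra U T \<and>
     (\<forall>a \<in> (linf :: (nat \<Rightarrow> 'a) set). a \<notin> cU U \<longrightarrow>
        (\<exists>b \<in> linf. \<exists>c \<in> linf. (\<lambda>n. b n * a n * c n - 1) \<in> cU U))"

end

theory Submission
  imports Defs
begin

text \<open>
  (1) \<open>\<Longrightarrow>\<close> (2): if \<open>C_pi\<close> were unbounded on the unit sphere, choose \<open>a\<^sub>n\<close> of norm 1 with
  \<open>C_pi a\<^sub>n > n\<close>. Pure infiniteness of the ultrapower gives bounded \<open>b\<^sub>n\<close>, \<open>c\<^sub>n\<close> with
  \<open>b\<^sub>n a\<^sub>n c\<^sub>n \<rightarrow> 1\<close> along \<open>U\<close>, and a Neumann series turns this into exact factorisations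
  of \<open>1\<close> with uniformly bounded factors; since \<open>U\<close> is non-principal, this happens for some
  arbitrarily large \<open>n\<close>, a contradiction.

  (2) \<open>\<Longrightarrow>\<close> (1): rescaling almost optimal factorisations of \<open>a\<^sub>n / \<parallel>a\<^sub>n\<parallel>\<close> gives factors
  bounded in terms of a lower bound of \<open>\<parallel>a\<^sub>n\<parallel>\<close>, which exists along \<open>U\<close> for every non-zero
  element of the ultrapower. The ultrapower is not a division algebra: applied to constant
  sequences, approximate inverses become inverses in \<open>A\<close>, so \<open>A\<close> would be a division algebra
  and hence \<open>\<complex>\<close> by Gelfand--Mazur. For Gelfand--Mazur we use Rickart's elementary argument:
  an everywhere defined resolvent \<open>R\<close> is continuous and small at infinity, so \<open>\<parallel>R\<parallel>\<close> attains
  its maximum; averaging the expansion of \<open>R\<close> over \<open>n\<close>-th roots of unity shows that the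
  maximum is attained again at every nearby point, so it spreads to infinity.
\<close>

lemma inverse_of_near_one:
  fixes z :: "'a::{real_normed_algebra_1,banach}"
  assumes "norm (1 - z) < 1"
  shows "\<exists>w. w * z = 1 \<and> z * w = 1 \<and> norm w \<le> 1 / (1 - norm (1 - z))"
proof -
  define u where "u = 1 - z"
  have u: "norm u < 1" using assms by (simp add: u_def)
  have z: "z = 1 - u" by (simp add: u_def)
  have geometric: "summable (\<lambda>k. u ^ k)" by (rule complete_algebra_summable_geometric[OF u])
  define w where "w = (\<Sum>k. u ^ k)"
  have telescope: "(\<lambda>k. u ^ k - u ^ Suc k) sums 1"
    using telescope_sums'[OF LIMSEQ_power_zero[OF u]] by simp
  have "(\<lambda>k. u ^ k * z) sums (w * z)"
    unfolding w_def by (rule sums_mult2[OF summable_sums[OF geometric]])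
  moreover have "(\<lambda>k. u ^ k * z) = (\<lambda>k. u ^ k - u ^ Suc k)"
    by (simp add: z algebra_simps power_commutes)
  ultimately have left: "w * z = 1" using telescope sums_unique2 by metis
  have "(\<lambda>k. z * u ^ k) sums (z * w)"
    unfolding w_def by (rule sums_mult[OF summable_sums[OF geometric]])
  moreover have "(\<lambda>k. z * u ^ k) = (\<lambda>k. u ^ k - u ^ Suc k)"
    by (simp add: z algebra_simps)
  ultimately have right: "z * w = 1" using telescope sums_unique2 by metis
  have norm_summable: "summable (\<lambda>k. norm (u ^ k))"
    by (rule summable_comparison_test[OF _ summable_geometric[of "norm u"]])
       (use u in \<open>auto simp: norm_power_ineq\<close>)
  have "norm w \<le> (\<Sum>k. norm (u ^ k))" unfolding w_def by (rule summable_norm[OF norm_summable])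
  also have "\<dots> \<le> (\<Sum>k. norm u ^ k)"
    by (rule suminf_le[OF _ norm_summable]) (use u in \<open>auto simp: norm_power_ineq\<close>)
  also have "\<dots> = 1 / (1 - norm u)" using u by (simp add: suminf_geometric)
  finally show ?thesis using left right by (auto simp: u_def)
qed

lemma invertible_if_approximate_inverse:
  fixes x y :: "'a::{real_normed_algebra_1,banach}"
  assumes "norm (x * y - 1) < 1" and "norm (y * x - 1) < 1"
  shows "\<exists>z. z * x = 1 \<and> x * z = 1"
proof -
  have "norm (1 - x * y) < 1" "norm (1 - y * x) < 1"
    using assms by (simp_all add: norm_minus_commute)
  then obtain r l where r: "(x * y) * r = 1" and l: "l * (y * x) = 1"
    using inverse_of_near_one by blast
  have "(y * r) * x = (l * (y * x)) * ((y * r) * x)" using l by simp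
  also have "\<dots> = l * (y * ((x * y) * r)) * x" by (simp only: mult.assoc)
  also have "\<dots> = 1" using l r by (simp add: mult.assoc)
  finally have "(y * r) * x = 1" .
  moreover have "x * (y * r) = 1" using r by (simp add: mult.assoc)
  ultimately show ?thesis by blast
qed

lemma C_pi_le: "b * a * c = 1 \<Longrightarrow> C_pi a \<le> ereal (norm b * norm c)"
  unfolding C_pi_def by (rule INF_lower2[of "(b, c)"]) auto

lemma C_pi_le_if_approximate_factorisation:
  fixes a b c :: "'a::{real_normed_algebra_1,banach}"
  assumes "norm (b * a * c - 1) < 1 / 2"
  shows "C_pi a \<le> ereal (2 * norm b * norm c)"
proof -
  obtain w where w: "w * (b * a * c) = 1" and norm_w: "norm w \<le> 1 / (1 - norm (b * a * c - 1))"
    using inverse_of_near_one[of "b * a * c"] assms by (auto simp: norm_minus_commute)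
  have "1 / (1 - norm (b * a * c - 1)) \<le> 2"
    using assms by (simp add: pos_divide_le_eq)
  with norm_w have "norm w \<le> 2" by linarith
  have "(w * b) * a * c = 1" using w by (simp add: mult.assoc)
  then have "C_pi a \<le> ereal (norm (w * b) * norm c)" by (rule C_pi_le)
  also have "norm (w * b) * norm c \<le> norm w * norm b * norm c"
    by (simp add: mult_right_mono norm_mult_ineq)
  also have "\<dots> \<le> 2 * norm b * norm c"
    using \<open>norm w \<le> 2\<close> by (simp add: mult_right_mono mult.assoc)
  finally show ?thesis by simp
qed

lemma C_pi_less_imp_factorisation:
  "C_pi a < ereal K \<Longrightarrow> \<exists>b c. b * a * c = 1 \<and> norm b * norm c < K"
  unfolding C_pi_def INF_less_iff by auto

lemma sum_root_unity_powers:
  fixes n k :: nat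
  assumes "k < n"
  shows "(\<Sum>j<n. (exp (2 * of_real pi * \<i> / of_nat n) ^ j) ^ k) = (if k = 0 then of_nat n else 0)"
proof (cases "k = 0")
  case False
  define \<omega> where "\<omega> = exp (2 * of_real pi * \<i> / of_nat n)"
  have power: "\<omega> ^ i = exp (2 * of_real pi * \<i> * of_nat i / of_nat n)" for i
    unfolding \<omega>_def exp_of_nat_mult[symmetric] by (simp add: field_simps)
  have "\<omega> ^ k \<noteq> 1"
    using complex_root_unity_eq_1[of n k] power[of k] assms False by (auto dest: dvd_imp_le)
  moreover have "(\<omega> ^ k) ^ n = 1"
    using complex_root_unity_eq_1[of n n] power[of n] assms
    by (simp add: power_mult[symmetric] mult.commute[of k] power_mult)
  ultimately have "(\<Sum>j<n. (\<omega> ^ k) ^ j) = 0" by (simp add: geometric_sum)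
  then show ?thesis
    using False by (simp add: \<omega>_def power_mult[symmetric] mult.commute)
qed simp

lemma norm_sum_lessThan_Suc_le:
  fixes f :: "nat \<Rightarrow> 'a::real_normed_vector"
  assumes "\<And>j. norm (f j) \<le> M"
  shows "norm (\<Sum>j<Suc n. f j) \<le> norm (f 0) + real n * M"
proof -
  have "norm (\<Sum>j<Suc n. f j) \<le> norm (f 0) + norm (\<Sum>j<n. f (Suc j))"
    unfolding sum.lessThan_Suc_shift by (rule norm_triangle_ineq)
  also have "norm (\<Sum>j<n. f (Suc j)) \<le> (\<Sum>j<n. norm (f (Suc j)))"
    by (rule norm_sum)
  also have "\<dots> \<le> real n * M"
    using sum_bounded_above[of "{..<n}" "\<lambda>j. norm (f (Suc j))" M] assms by simp
  finally show ?thesis by simp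
qed

lemma continuous_attains_global_sup:
  fixes f :: "'a::{heine_borel,real_normed_vector} \<Rightarrow> real"
  assumes "continuous_on UNIV f" and far: "\<And>c. \<rho> < norm c \<Longrightarrow> f c \<le> f 0"
  shows "\<exists>\<mu>. \<forall>c. f c \<le> f \<mu>"
proof -
  have "cball 0 (max \<rho> 0) \<noteq> {}" by simp
  then obtain \<mu> where \<mu>: "\<And>c. c \<in> cball 0 (max \<rho> 0) \<Longrightarrow> f c \<le> f \<mu>"
    using continuous_attains_sup[OF compact_cball _ continuous_on_subset[OF assms(1)]] by blast
  have "f c \<le> f \<mu>" for c
  proof (cases "c \<in> cball 0 (max \<rho> 0)")
    case False
    then have "f c \<le> f 0" by (intro far) simp
    also have "f 0 \<le> f \<mu>" by (rule \<mu>) simp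
    finally show ?thesis .
  qed (rule \<mu>)
  then show ?thesis by blast
qed

locale complex_banach_alg =
  fixes cmult :: "complex \<Rightarrow> 'a::{real_normed_algebra_1,banach} \<Rightarrow> 'a"  (infixr \<open>*\<^sub>C\<close> 75)
  assumes complex_banach_algebra: "complex_banach_algebra cmult"
begin

lemma
  shows cmult_one: "1 *\<^sub>C x = x"
    and cmult_cmult: "c *\<^sub>C (d *\<^sub>C x) = (c * d) *\<^sub>C x"
    and cmult_add_left: "(c + d) *\<^sub>C x = c *\<^sub>C x + d *\<^sub>C x"
    and cmult_add_right: "c *\<^sub>C (x + y) = c *\<^sub>C x + c *\<^sub>C y"
    and cmult_mult_left: "(c *\<^sub>C x) * y = c *\<^sub>C (x * y)"
    and cmult_mult_right: "x * (c *\<^sub>C y) = c *\<^sub>C (x * y)"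
    and norm_cmult: "norm (c *\<^sub>C x) = cmod c * norm x"
  using complex_banach_algebra unfolding complex_banach_algebra_def by metis+

sublocale module cmult
  by standard (simp_all add: cmult_add_left cmult_add_right cmult_cmult cmult_one)

definition resolvent_on :: "'a \<Rightarrow> (complex \<Rightarrow> 'a) \<Rightarrow> complex set \<Rightarrow> bool" where
  "resolvent_on x R S \<longleftrightarrow> (\<forall>c\<in>S. R c * (x - c *\<^sub>C 1) = 1 \<and> (x - c *\<^sub>C 1) * R c = 1)"

lemma resolvent_nonzero: "resolvent_on x R S \<Longrightarrow> c \<in> S \<Longrightarrow> R c \<noteq> 0"
  unfolding resolvent_on_def by force

lemma resolvent_identity:
  assumes R: "resolvent_on x R S" and "a \<in> S" "a + l \<in> S"
  shows "R (a + l) - R a = l *\<^sub>C (R a * R (a + l))"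
proof -
  have "R a = R a * (x - (a + l) *\<^sub>C 1) * R (a + l)"
    using R \<open>a + l \<in> S\<close> unfolding resolvent_on_def by (simp add: mult.assoc)
  moreover have "R (a + l) = R a * (x - a *\<^sub>C 1) * R (a + l)"
    using R \<open>a \<in> S\<close> unfolding resolvent_on_def by simp
  ultimately have "R (a + l) - R a = R a * ((x - a *\<^sub>C 1) - (x - (a + l) *\<^sub>C 1)) * R (a + l)"
    by (metis left_diff_distrib right_diff_distrib)
  also have "(x - a *\<^sub>C 1) - (x - (a + l) *\<^sub>C 1) = l *\<^sub>C 1"
    by (simp add: scale_left_distrib)
  finally show ?thesis by (simp add: cmult_mult_left cmult_mult_right)
qed

lemma resolvent_expansion:
  assumes R: "resolvent_on x R S" and "a \<in> S" "a + l \<in> S"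
  shows "R (a + l) = (\<Sum>k<N. l ^ k *\<^sub>C R a ^ Suc k) + l ^ N *\<^sub>C (R a ^ N * R (a + l))"
proof (induction N)
  case (Suc N)
  have step: "R (a + l) = R a + l *\<^sub>C (R a * R (a + l))"
    using resolvent_identity[OF assms] by (metis add.commute diff_eq_eq)
  have "R a ^ N * R (a + l) = R a ^ N * (R a + l *\<^sub>C (R a * R (a + l)))"
    by (rule arg_cong[OF step])
  also have "\<dots> = R a ^ Suc N + l *\<^sub>C (R a ^ Suc N * R (a + l))"
    by (simp only: distrib_left cmult_mult_right mult.assoc[symmetric] power_Suc2[symmetric])
  finally have "R a ^ N * R (a + l) = R a ^ Suc N + l *\<^sub>C (R a ^ Suc N * R (a + l))" .
  then show ?case using Suc by (simp add: scale_right_distrib mult.commute add.assoc)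
qed simp

lemma isCont_resolvent:
  assumes R: "resolvent_on x R S" and "open S" "a \<in> S"
  shows "isCont R a"
proof -
  define M where "M = norm (R a)"
  have M: "M > 0" using resolvent_nonzero[OF R \<open>a \<in> S\<close>] by (simp add: M_def)
  obtain r where r: "r > 0" "ball a r \<subseteq> S" using assms open_contains_ball by blast
  have "eventually (\<lambda>h. norm (R (a + h) - R a) \<le> cmod h * M * (2 * M)) (at 0)"
    unfolding eventually_at ball_UNIV
  proof (intro exI[of _ "min r (1 / (2 * M))"] conjI allI impI)
    show "min r (1 / (2 * M)) > 0" using r M by simp
    fix h :: complex assume "h \<noteq> 0 \<and> dist h 0 < min r (1 / (2 * M))"
    then have "a + h \<in> S" and h: "cmod h * M < 1 / 2"
      using r M by (auto simp: dist_norm field_simps)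
    have diff: "norm (R (a + h) - R a) \<le> cmod h * M * norm (R (a + h))"
      unfolding M_def resolvent_identity[OF R \<open>a \<in> S\<close> \<open>a + h \<in> S\<close>]
      by (simp add: norm_cmult mult.assoc mult_left_mono norm_mult_ineq)
    have "norm (R (a + h)) - M \<le> cmod h * M * norm (R (a + h))"
      using norm_triangle_ineq2[of "R (a + h)" "R a"] diff unfolding M_def by linarith
    also have "\<dots> \<le> norm (R (a + h)) / 2"
      using mult_right_mono[OF less_imp_le[OF h] norm_ge_zero] by simp
    finally have "norm (R (a + h)) \<le> 2 * M" by simp
    then have "cmod h * M * norm (R (a + h)) \<le> cmod h * M * (2 * M)"
      using M by (intro mult_left_mono) auto
    with diff show "norm (R (a + h) - R a) \<le> cmod h * M * (2 * M)" by linarith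
  qed
  moreover have "((\<lambda>h. cmod h * M * (2 * M)) \<longlongrightarrow> 0) (at 0)"
    by (auto intro!: tendsto_eq_intros)
  ultimately have "((\<lambda>h. R (a + h) - R a) \<longlongrightarrow> 0) (at 0)"
    by (rule Lim_null_comparison)
  then show ?thesis by (simp add: isCont_iff LIM_zero_iff)
qed

lemma norm_resolvent_less:
  assumes R: "resolvent_on x R S" and "c \<in> S" "K > 0" and large: "norm x + 1 / K < cmod c"
  shows "norm (R c) < K"
proof -
  have "R c * x - c *\<^sub>C R c = 1"
    using R \<open>c \<in> S\<close> unfolding resolvent_on_def by (simp add: right_diff_distrib cmult_mult_right)
  then have "cmod c * norm (R c) = norm (R c * x - 1)"
    by (metis norm_cmult add_diff_cancel_left' diff_add_cancel)
  then have le: "norm (R c) * (cmod c - norm x) \<le> 1"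
    using norm_triangle_ineq4[of "R c * x" 1] norm_mult_ineq[of "R c" x]
    by (simp add: algebra_simps)
  have "1 < K * (cmod c - norm x)"
    using large \<open>K > 0\<close> by (simp add: field_simps)
  moreover have "cmod c - norm x > 0"
    using large \<open>K > 0\<close> divide_pos_pos[of 1 K] by linarith
  ultimately show ?thesis
    using le by (smt (verit) mult_right_mono)
qed

lemma resolvent_average:
  fixes n :: nat
  defines "\<omega> \<equiv> exp (2 * of_real pi * \<i> / of_nat n)"
  assumes R: "resolvent_on x R S" and "m \<in> S" and circle: "\<And>j. m + \<omega> ^ j * l \<in> S" and "n > 0"
  defines "T \<equiv> \<Sum>j<n. R (m + \<omega> ^ j * l)"
  shows "T = of_nat n *\<^sub>C R m + l ^ n *\<^sub>C (R m ^ n * T)"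
proof -
  have "\<omega> ^ n = 1"
    using \<open>n > 0\<close> by (simp add: \<omega>_def exp_of_nat_mult[symmetric])
  then have root: "(\<omega> ^ j) ^ n = 1" for j
    by (metis power_mult mult.commute power_one)
  have "(\<Sum>j<n. \<Sum>k<n. (\<omega> ^ j * l) ^ k *\<^sub>C R m ^ Suc k)
      = (\<Sum>k<n. ((\<Sum>j<n. (\<omega> ^ j) ^ k) * l ^ k) *\<^sub>C R m ^ Suc k)"
    by (subst sum.swap) (simp add: scale_sum_left sum_distrib_right power_mult_distrib)
  also have "\<dots> = (\<Sum>k<n. if k = 0 then of_nat n *\<^sub>C R m else 0)"
    by (intro sum.cong refl) (simp add: sum_root_unity_powers \<omega>_def)
  also have "\<dots> = of_nat n *\<^sub>C R m"
    using \<open>n > 0\<close> by simp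
  finally have first: "(\<Sum>j<n. \<Sum>k<n. (\<omega> ^ j * l) ^ k *\<^sub>C R m ^ Suc k) = of_nat n *\<^sub>C R m" .
  have second: "(\<Sum>j<n. (\<omega> ^ j * l) ^ n *\<^sub>C (R m ^ n * R (m + \<omega> ^ j * l))) = l ^ n *\<^sub>C (R m ^ n * T)"
    unfolding T_def by (simp add: power_mult_distrib root sum_distrib_left scale_sum_right)
  have "T = (\<Sum>j<n. (\<Sum>k<n. (\<omega> ^ j * l) ^ k *\<^sub>C R m ^ Suc k)
                    + (\<omega> ^ j * l) ^ n *\<^sub>C (R m ^ n * R (m + \<omega> ^ j * l)))"
    unfolding T_def by (intro sum.cong refl resolvent_expansion[OF R \<open>m \<in> S\<close> circle])
  also have "\<dots> = of_nat n *\<^sub>C R m + l ^ n *\<^sub>C (R m ^ n * T)"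
    by (simp only: sum.distrib first second)
  finally show ?thesis .
qed

lemma resolvent_norm_defect_le:
  assumes R: "resolvent_on x R S" and "m \<in> S" and sphere: "sphere m (cmod l) \<subseteq> S"
    and max: "\<And>c. c \<in> sphere m (cmod l) \<Longrightarrow> norm (R c) \<le> norm (R m)" and "n > 0"
  shows "norm (R m) - norm (R (m + l)) \<le> real n * (cmod l * norm (R m)) ^ n * norm (R m)"
proof -
  define \<omega> where "\<omega> = exp (2 * of_real pi * \<i> / of_nat n)"
  define M where "M = norm (R m)"
  define T where "T = (\<Sum>j<n. R (m + \<omega> ^ j * l))"
  have "cmod \<omega> = 1" by (simp add: \<omega>_def)
  then have on_sphere: "m + \<omega> ^ j * l \<in> sphere m (cmod l)" for j
    by (simp add: dist_norm norm_mult norm_power)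
  have T: "T = of_nat n *\<^sub>C R m + l ^ n *\<^sub>C (R m ^ n * T)"
    unfolding T_def \<omega>_def
    by (rule resolvent_average[OF R \<open>m \<in> S\<close> _ \<open>n > 0\<close>])
       (use on_sphere sphere in \<open>auto simp: \<omega>_def\<close>)
  obtain n' where n': "n = Suc n'" using \<open>n > 0\<close> gr0_implies_Suc by blast
  have on_sphere_le: "norm (R (m + \<omega> ^ j * l)) \<le> M" for j
    unfolding M_def by (rule max[OF on_sphere])
  \<comment> \<open>the term \<open>j = 0\<close> of the average is \<open>R (m + l)\<close>, the others are bounded by the maximum\<close>
  have norm_T: "norm T \<le> norm (R (m + l)) + real n' * M"
    using norm_sum_lessThan_Suc_le[of "\<lambda>j. R (m + \<omega> ^ j * l)", OF on_sphere_le]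
    unfolding T_def n' by simp
  moreover have "norm (R (m + l)) \<le> M"
    using on_sphere_le[of 0] by simp
  ultimately have norm_T': "norm T \<le> real n * M"
    unfolding n' by (simp add: algebra_simps)
  have "norm (l ^ n *\<^sub>C (R m ^ n * T)) \<le> cmod l ^ n * (M ^ n * (real n * M))"
    using norm_mult_ineq[of "R m ^ n" T] norm_power_ineq[of "R m" n] norm_T'
    unfolding norm_cmult norm_power M_def
    by (intro mult_left_mono order_trans[OF norm_mult_ineq] mult_mono) auto
  also have "\<dots> = real n * (cmod l * M) ^ n * M"
    by (simp add: power_mult_distrib)
  finally have small: "norm (l ^ n *\<^sub>C (R m ^ n * T)) \<le> real n * (cmod l * M) ^ n * M" .
  have "real n * M = norm (of_nat n *\<^sub>C R m)"
    by (simp add: norm_cmult M_def)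
  also have "of_nat n *\<^sub>C R m = T - l ^ n *\<^sub>C (R m ^ n * T)"
    using T by (metis add_diff_cancel_right')
  also have "norm (T - l ^ n *\<^sub>C (R m ^ n * T)) \<le> norm T + norm (l ^ n *\<^sub>C (R m ^ n * T))"
    by (rule norm_triangle_ineq4)
  finally show ?thesis
    using norm_T small unfolding M_def n' by (simp add: algebra_simps)
qed

lemma resolvent_norm_max_spreads:
  assumes R: "resolvent_on x R S" and "m \<in> S" and sphere: "sphere m (cmod l) \<subseteq> S"
    and max: "\<And>c. c \<in> sphere m (cmod l) \<Longrightarrow> norm (R c) \<le> norm (R m)"
    and small: "cmod l * norm (R m) < 1"
  shows "norm (R (m + l)) = norm (R m)"
proof (rule antisym)
  show "norm (R (m + l)) \<le> norm (R m)"
    by (rule max) (simp add: dist_norm)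
  have "(\<lambda>n. of_nat n * (cmod l * norm (R m)) ^ n) \<longlonglongrightarrow> 0"
    by (rule powser_times_n_limit_0) (use small in simp)
  then have "(\<lambda>n. real n * (cmod l * norm (R m)) ^ n * norm (R m)) \<longlonglongrightarrow> 0"
    by (rule tendsto_mult_left_zero)
  then have "norm (R m) - norm (R (m + l)) \<le> 0"
    by (rule LIMSEQ_le_const)
       (use resolvent_norm_defect_le[OF R \<open>m \<in> S\<close> sphere max] in \<open>auto intro!: exI[of _ 1]\<close>)
  then show "norm (R m) \<le> norm (R (m + l))" by simp
qed

lemma spectrum_nonempty: "\<exists>c. \<not> (\<exists>y. y * (x - c *\<^sub>C 1) = 1 \<and> (x - c *\<^sub>C 1) * y = 1)"
proof (rule ccontr)
  assume "\<nexists>c. \<not> (\<exists>y. y * (x - c *\<^sub>C 1) = 1 \<and> (x - c *\<^sub>C 1) * y = 1)"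
  then have "\<forall>c. \<exists>y. y * (x - c *\<^sub>C 1) = 1 \<and> (x - c *\<^sub>C 1) * y = 1" by blast
  from choice[OF this] obtain R where "\<forall>c. R c * (x - c *\<^sub>C 1) = 1 \<and> (x - c *\<^sub>C 1) * R c = 1"
    by blast
  then have R: "resolvent_on x R UNIV" by (simp add: resolvent_on_def)
  have R0: "norm (R 0) > 0" using resolvent_nonzero[OF R] by simp
  have "\<exists>\<mu>. \<forall>c. norm (R c) \<le> norm (R \<mu>)"
  proof (rule continuous_attains_global_sup)
    show "continuous_on UNIV (\<lambda>c. norm (R c))"
      by (intro continuous_at_imp_continuous_on ballI isCont_norm isCont_resolvent[OF R open_UNIV UNIV_I])
    show "norm (R c) \<le> norm (R 0)" if "norm x + 1 / norm (R 0) < norm c" for c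
      using norm_resolvent_less[OF R UNIV_I R0 that] by simp
  qed
  then obtain \<mu> where \<mu>: "\<And>c. norm (R c) \<le> norm (R \<mu>)" by blast
  define M where "M = norm (R \<mu>)"
  have max: "norm (R c) \<le> M" for c using \<mu> by (simp add: M_def)
  have M: "M > 0" using R0 max[of 0] by linarith
  define e where "e = 1 / (2 * M)"
  have "e > 0" using M by (simp add: e_def)
  have step_small: "cmod (complex_of_real e) * M < 1"
    using M by (simp only: norm_of_real) (simp add: e_def)
  have ray: "norm (R (\<mu> + of_real (real k * e))) = M" for k
  proof (induction k)
    case (Suc k)
    have "norm (R ((\<mu> + of_real (real k * e)) + of_real e)) = norm (R (\<mu> + of_real (real k * e)))"
      by (rule resolvent_norm_max_spreads[OF R UNIV_I subset_UNIV])
         (use max Suc step_small in simp_all)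
    then show ?case using Suc by (simp add: algebra_simps)
  qed (simp add: M_def)
  obtain k where k: "cmod \<mu> + norm x + 1 / M < real k * e"
    using ex_less_of_nat_mult[OF \<open>e > 0\<close>] by blast
  have "real k * e = cmod ((\<mu> + of_real (real k * e)) - \<mu>)"
    using \<open>e > 0\<close> by (simp only: add_diff_cancel_left' norm_of_real) simp
  also have "\<dots> \<le> cmod (\<mu> + of_real (real k * e)) + cmod \<mu>" by (rule norm_triangle_ineq4)
  finally have "norm (R (\<mu> + of_real (real k * e))) < M"
    using k by (intro norm_resolvent_less[OF R UNIV_I M]) simp
  then show False using ray by simp
qed

lemma scalar_if_division_algebra:
  assumes "\<And>y::'a. y \<noteq> 0 \<Longrightarrow> \<exists>z. z * y = 1 \<and> y * z = 1"
  shows "\<exists>c. x = c *\<^sub>C 1"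
proof -
  obtain c where "\<not> (\<exists>y. y * (x - c *\<^sub>C 1) = 1 \<and> (x - c *\<^sub>C 1) * y = 1)"
    using spectrum_nonempty by blast
  then have "x - c *\<^sub>C 1 = 0" using assms[of "x - c *\<^sub>C 1"] by blast
  then show ?thesis by auto
qed

lemma iso_to_complex_if_division_algebra:
  assumes "\<And>y::'a. y \<noteq> 0 \<Longrightarrow> \<exists>z. z * y = 1 \<and> y * z = 1"
  shows "iso_to_complex cmult"
proof -
  define \<iota> where "\<iota> c = c *\<^sub>C (1::'a)" for c
  have "inj \<iota>"
  proof (rule injI)
    fix c d assume "\<iota> c = \<iota> d"
    then have "(c - d) *\<^sub>C (1::'a) = 0" by (simp add: \<iota>_def scale_left_diff_distrib)
    then have "cmod (c - d) = 0" using norm_cmult[of "c - d" "1::'a"] by simp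
    then show "c = d" by simp
  qed
  moreover have "surj \<iota>"
    using scalar_if_division_algebra[OF assms] unfolding \<iota>_def by (metis surjI)
  ultimately have "bij \<iota>" by (rule bijI)
  define \<phi> where "\<phi> = inv \<iota>"
  have \<iota>_\<phi>: "\<iota> (\<phi> x) = x" for x
    unfolding \<phi>_def by (rule surj_f_inv_f[OF \<open>surj \<iota>\<close>])
  have \<phi>_eqI: "\<phi> x = c" if "\<iota> c = x" for x c
    using \<open>inj \<iota>\<close> \<iota>_\<phi>[of x] that by (metis injD)
  show ?thesis
    unfolding iso_to_complex_def
  proof (intro exI[of _ \<phi>] conjI allI)
    show "bij \<phi>" unfolding \<phi>_def by (rule bij_imp_bij_inv[OF \<open>bij \<iota>\<close>])
    fix x y :: 'a and z :: complex
    show "\<phi> (x + y) = \<phi> x + \<phi> y"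
      by (rule \<phi>_eqI) (use \<iota>_\<phi> in \<open>simp add: \<iota>_def scale_left_distrib\<close>)
    show "\<phi> (z *\<^sub>C x) = z * \<phi> x"
      by (rule \<phi>_eqI) (use \<iota>_\<phi> in \<open>simp add: \<iota>_def flip: scale_scale\<close>)
    have "x * y = (\<phi> x *\<^sub>C 1) * y" using \<iota>_\<phi>[of x] by (simp add: \<iota>_def)
    then have "x * y = \<phi> x *\<^sub>C y" by (simp add: cmult_mult_left)
    then show "\<phi> (x * y) = \<phi> x * \<phi> y"
      by (intro \<phi>_eqI) (use \<iota>_\<phi>[of y] in \<open>simp add: \<iota>_def flip: scale_scale\<close>)
  next
    show "\<phi> 1 = 1" by (rule \<phi>_eqI) (simp add: \<iota>_def)
  qed
qed

end

lemma ultrafilter_nat_nontrivial: "ultrafilter_nat U \<Longrightarrow> U \<noteq> bot"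
  unfolding ultrafilter_nat_def by blast

lemma eventually_not_if_not_eventually:
  "ultrafilter_nat U \<Longrightarrow> \<not> eventually P U \<Longrightarrow> eventually (\<lambda>n. \<not> P n) U"
  unfolding ultrafilter_nat_def by blast

lemma eventually_gt_if_nonprincipal:
  assumes "ultrafilter_nat U" and "nonprincipal U"
  shows "eventually (\<lambda>n. N < n) U"
proof -
  have "\<forall>k\<in>{..N}. eventually (\<lambda>n. n \<noteq> k) U"
    using assms eventually_not_if_not_eventually[of U "\<lambda>n. n = _"] unfolding nonprincipal_def by blast
  then have "eventually (\<lambda>n. \<forall>k\<in>{..N}. n \<noteq> k) U"
    by (rule eventually_ball_finite[rotated]) simp
  then show ?thesis by eventually_elim (auto simp: not_le[symmetric])
qed

lemma linf_iff: "a \<in> linf \<longleftrightarrow> (\<exists>B. \<forall>n. norm (a n) \<le> B)"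
  unfolding linf_def bounded_iff by auto

lemma linf_mult:
  fixes a b :: "nat \<Rightarrow> 'a::real_normed_algebra"
  assumes "a \<in> linf" and "b \<in> linf"
  shows "(\<lambda>n. a n * b n) \<in> linf"
proof -
  obtain A B where A: "\<And>n. norm (a n) \<le> A" and B: "\<And>n. norm (b n) \<le> B"
    using assms by (auto simp: linf_iff)
  have "norm (a n * b n) \<le> A * B" for n
  proof -
    have "norm (a n * b n) \<le> norm (a n) * norm (b n)" by (rule norm_mult_ineq)
    also have "\<dots> \<le> A * B"
      using A[of n] B[of n] order_trans[OF norm_ge_zero A[of n]] by (intro mult_mono) simp_all
    finally show ?thesis .
  qed
  then show ?thesis by (auto simp: linf_iff)
qed

lemma linf_diff_const:
  assumes "a \<in> linf"
  shows "(\<lambda>n. a n - c) \<in> linf"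
proof -
  obtain A where A: "\<And>n. norm (a n) \<le> A" using assms by (auto simp: linf_iff)
  have "norm (a n - c) \<le> A + norm c" for n
    using norm_triangle_ineq4[of "a n" c] A[of n] by linarith
  then show ?thesis by (auto simp: linf_iff)
qed

lemma cU_if_eventually_zero: "a \<in> linf \<Longrightarrow> eventually (\<lambda>n. a n = 0) U \<Longrightarrow> a \<in> cU U"
  unfolding cU_def by (auto intro!: tendsto_eventually elim: eventually_mono)

lemma eventually_norm_less_if_cU:
  "a \<in> cU U \<Longrightarrow> \<epsilon> > 0 \<Longrightarrow> eventually (\<lambda>n. norm (a n) < \<epsilon>) U"
  unfolding cU_def by (auto dest: order_tendstoD)

lemma not_cU_if_norm_bounded_below:
  assumes "U \<noteq> bot" and "\<epsilon> > 0" and "\<And>n. \<epsilon> \<le> norm (a n)"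
  shows "a \<notin> cU U"
proof
  assume "a \<in> cU U"
  then have "eventually (\<lambda>n. norm (a n) < \<epsilon>) U"
    using \<open>\<epsilon> > 0\<close> by (rule eventually_norm_less_if_cU)
  then have "eventually (\<lambda>n. False) U"
    by (rule eventually_mono) (use assms(3) not_less in blast)
  then show False using \<open>U \<noteq> bot\<close> by simp
qed

lemma eventually_norm_ge_if_not_cU:
  assumes "ultrafilter_nat U" and "a \<in> linf" and "a \<notin> cU U"
  shows "\<exists>\<epsilon>>0. eventually (\<lambda>n. \<epsilon> \<le> norm (a n)) U"
proof -
  have "\<not> ((\<lambda>n. norm (a n)) \<longlongrightarrow> 0) U" using assms(2,3) unfolding cU_def by auto
  moreover have "eventually (\<lambda>n. l < norm (a n)) U" if "l < 0" for l
    using that by (intro always_eventually allI) (meson less_le_trans norm_ge_zero)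
  ultimately obtain \<epsilon> where "\<epsilon> > 0" and "\<not> eventually (\<lambda>n. norm (a n) < \<epsilon>) U"
    unfolding order_tendsto_iff by auto
  then have "eventually (\<lambda>n. \<not> norm (a n) < \<epsilon>) U"
    using eventually_not_if_not_eventually[OF assms(1)] by blast
  then show ?thesis using \<open>\<epsilon> > 0\<close> by (auto simp: not_less)
qed

lemma C_pi_bounded_if_ultrapower_purely_infinite:
  assumes U: "ultrafilter_nat U" and "nonprincipal U"
    and purely_infinite: "ultrapower_purely_infinite U TYPE('a::{real_normed_algebra_1,banach})"
  shows "\<exists>K>0. \<forall>a::'a. norm a = 1 \<longrightarrow> C_pi a < ereal K"
proof (rule ccontr)
  assume unbounded: "\<not> ?thesis"
  have "\<exists>a::'a. norm a = 1 \<and> \<not> C_pi a < ereal (real n + 1)" for n :: nat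
  proof -
    have "real n + 1 > 0" by simp
    then show ?thesis using unbounded by blast
  qed
  then have "\<forall>n::nat. \<exists>a::'a. norm a = 1 \<and> \<not> C_pi a < ereal (real n + 1)" by blast
  from choice[OF this] obtain a :: "nat \<Rightarrow> 'a"
    where a: "\<forall>n. norm (a n) = 1 \<and> \<not> C_pi (a n) < ereal (real n + 1)"
    by blast
  then have norm_a: "\<And>n. norm (a n) = 1" and large: "\<And>n. \<not> C_pi (a n) < ereal (real n + 1)"
    by simp_all
  have "a \<in> linf" by (auto simp: linf_iff norm_a)
  moreover have "a \<notin> cU U"
    by (rule not_cU_if_norm_bounded_below[of U 1]) (simp_all add: ultrafilter_nat_nontrivial[OF U] norm_a)
  ultimately obtain b c where "b \<in> linf" "c \<in> linf" and bac: "(\<lambda>n. b n * a n * c n - 1) \<in> cU U"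
    using purely_infinite unfolding ultrapower_purely_infinite_def by blast
  then obtain B C where B: "\<And>n. norm (b n) \<le> B" and C: "\<And>n. norm (c n) \<le> C"
    by (auto simp: linf_iff)
  have "eventually (\<lambda>n. norm (b n * a n * c n - 1) < 1 / 2) U"
    using eventually_norm_less_if_cU[OF bac, of "1 / 2"] by simp
  moreover have "eventually (\<lambda>n. nat \<lceil>2 * B * C\<rceil> < n) U"
    by (rule eventually_gt_if_nonprincipal[OF assms(1,2)])
  ultimately obtain n where close: "norm (b n * a n * c n - 1) < 1 / 2" and "nat \<lceil>2 * B * C\<rceil> < n"
    using eventually_happens'[OF ultrafilter_nat_nontrivial[OF U] eventually_conj] by blast
  then have "2 * B * C < real n + 1" by linarith
  have "ereal (real n + 1) \<le> C_pi (a n)" using large[of n] by (simp add: not_less)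
  also have "C_pi (a n) \<le> ereal (2 * norm (b n) * norm (c n))"
    by (rule C_pi_le_if_approximate_factorisation[OF close])
  also have "2 * norm (b n) * norm (c n) \<le> 2 * B * C"
    using B[of n] C[of n] order_trans[OF norm_ge_zero B[of n]]
    by (simp add: mult.assoc mult_mono)
  finally have "real n + 1 \<le> 2 * B * C" by simp
  then show False using \<open>2 * B * C < real n + 1\<close> by simp
qed

lemma factorisation_bound_if_C_pi_bounded:
  fixes x :: "'a::real_normed_algebra_1"
  assumes bound: "\<And>a::'a. norm a = 1 \<Longrightarrow> C_pi a < ereal K" and "0 < \<epsilon>" "\<epsilon> \<le> norm x"
  shows "\<exists>b c. b * x * c = 1 \<and> norm b \<le> 1 \<and> norm c \<le> K / \<epsilon>"
proof -
  have x: "norm x > 0" using assms by linarith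
  obtain b c where bc: "b * (x /\<^sub>R norm x) * c = 1" and less: "norm b * norm c < K"
    using C_pi_less_imp_factorisation[OF bound[of "x /\<^sub>R norm x"]] x by auto
  have "b \<noteq> 0" using bc by auto
  have "K > 0" using less by (metis le_less_trans mult_nonneg_nonneg norm_ge_zero)
  have "(b /\<^sub>R norm b) * x * ((norm b / norm x) *\<^sub>R c) = 1"
    using bc \<open>b \<noteq> 0\<close> by (simp add: inverse_eq_divide)
  moreover have "norm (b /\<^sub>R norm b) \<le> 1" using \<open>b \<noteq> 0\<close> by simp
  moreover have "norm ((norm b / norm x) *\<^sub>R c) \<le> K / \<epsilon>"
  proof -
    have "norm ((norm b / norm x) *\<^sub>R c) = norm b * norm c / norm x" using x by simp
    also have "\<dots> \<le> K / norm x" using less x by (simp add: divide_right_mono)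
    also have "\<dots> \<le> K / \<epsilon>"
      using assms x \<open>K > 0\<close> by (intro divide_left_mono) simp_all
    finally show ?thesis .
  qed
  ultimately show ?thesis by blast
qed

lemma ultrapower_factorisation_if_C_pi_bounded:
  fixes a :: "nat \<Rightarrow> 'a::real_normed_algebra_1"
  assumes U: "ultrafilter_nat U" and "K > 0" and bound: "\<And>a::'a. norm a = 1 \<Longrightarrow> C_pi a < ereal K"
    and "a \<in> linf" "a \<notin> cU U"
  shows "\<exists>b\<in>linf. \<exists>c\<in>linf. (\<lambda>n. b n * a n * c n - 1) \<in> cU U"
proof -
  obtain \<epsilon> where "\<epsilon> > 0" and large: "eventually (\<lambda>n. \<epsilon> \<le> norm (a n)) U"
    using eventually_norm_ge_if_not_cU[OF assms(1,4,5)] by blast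
  have "\<forall>n. \<exists>b c. norm b \<le> 1 \<and> norm c \<le> K / \<epsilon> \<and> (\<epsilon> \<le> norm (a n) \<longrightarrow> b * a n * c = 1)"
  proof
    fix n
    show "\<exists>b c. norm b \<le> 1 \<and> norm c \<le> K / \<epsilon> \<and> (\<epsilon> \<le> norm (a n) \<longrightarrow> b * a n * c = 1)"
    proof (cases "\<epsilon> \<le> norm (a n)")
      case True
      then show ?thesis using factorisation_bound_if_C_pi_bounded[OF bound \<open>\<epsilon> > 0\<close>] by blast
    next
      case False
      then show ?thesis using \<open>K > 0\<close> \<open>\<epsilon> > 0\<close> by (intro exI[of _ 0]) auto
    qed
  qed
  from choice[OF this] obtain b
    where "\<forall>n. \<exists>c. norm (b n) \<le> 1 \<and> norm c \<le> K / \<epsilon> \<and> (\<epsilon> \<le> norm (a n) \<longrightarrow> b n * a n * c = 1)"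
    by blast
  from choice[OF this] obtain c
    where "\<forall>n. norm (b n) \<le> 1 \<and> norm (c n) \<le> K / \<epsilon> \<and> (\<epsilon> \<le> norm (a n) \<longrightarrow> b n * a n * c n = 1)"
    by blast
  then have b: "\<And>n. norm (b n) \<le> 1" and c: "\<And>n. norm (c n) \<le> K / \<epsilon>"
    and bac: "\<And>n. \<epsilon> \<le> norm (a n) \<Longrightarrow> b n * a n * c n = 1"
    by simp_all
  have "b \<in> linf" "c \<in> linf" using b c by (auto simp: linf_iff)
  moreover have "(\<lambda>n. b n * a n * c n - 1) \<in> cU U"
    by (intro cU_if_eventually_zero linf_diff_const linf_mult \<open>b \<in> linf\<close> \<open>c \<in> linf\<close> \<open>a \<in> linf\<close>)
       (use large in \<open>auto elim: eventually_mono simp: bac\<close>)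
  ultimately show ?thesis by blast
qed

lemma division_algebra_if_ultrapower_division_algebra:
  assumes U: "ultrafilter_nat U"
    and division: "ultrapower_division_algebra U TYPE('a::{real_normed_algebra_1,banach})"
    and "x \<noteq> 0"
  shows "\<exists>z::'a. z * x = 1 \<and> x * z = 1"
proof -
  have "(\<lambda>n. x) \<in> linf" by (auto simp: linf_iff)
  moreover have "(\<lambda>n. x) \<notin> cU U"
    by (rule not_cU_if_norm_bounded_below[of U "norm x"]) (use assms ultrafilter_nat_nontrivial in auto)
  ultimately obtain y where right: "(\<lambda>n. x * y n - 1) \<in> cU U" and left: "(\<lambda>n. y n * x - 1) \<in> cU U"
    using division unfolding ultrapower_division_algebra_def by blast
  have "eventually (\<lambda>n. norm (x * y n - 1) < 1) U" "eventually (\<lambda>n. norm (y n * x - 1) < 1) U"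
    using eventually_norm_less_if_cU[OF right] eventually_norm_less_if_cU[OF left] by simp_all
  then obtain n where "norm (x * y n - 1) < 1" "norm (y n * x - 1) < 1"
    using eventually_happens'[OF ultrafilter_nat_nontrivial[OF U] eventually_conj] by blast
  then show ?thesis by (rule invertible_if_approximate_inverse)
qed

theorem proposition2p2:
  fixes U :: "nat filter"
    and cmult :: "complex \<Rightarrow> 'a::{real_normed_algebra_1,banach} \<Rightarrow> 'a"
  assumes "ultrafilter_nat U" and "nonprincipal U"
    and "complex_banach_algebra cmult"
    and "\<not> iso_to_complex cmult"
  shows "ultrapower_purely_infinite U TYPE('a) \<longleftrightarrow>
         (\<exists>K>0. \<forall>a::'a. norm a = 1 \<longrightarrow> C_pi a < ereal K)"
proof
  assume "ultrapower_purely_infinite U TYPE('a)"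
  then show "\<exists>K>0. \<forall>a::'a. norm a = 1 \<longrightarrow> C_pi a < ereal K"
    by (rule C_pi_bounded_if_ultrapower_purely_infinite[OF assms(1,2)])
next
  assume "\<exists>K>0. \<forall>a::'a. norm a = 1 \<longrightarrow> C_pi a < ereal K"
  then obtain K where "K > 0" and bound: "\<And>a::'a. norm a = 1 \<Longrightarrow> C_pi a < ereal K" by blast
  interpret complex_banach_alg cmult by standard (rule assms(3))
  have "\<not> ultrapower_division_algebra U TYPE('a)"
    using division_algebra_if_ultrapower_division_algebra[OF assms(1)]
      iso_to_complex_if_division_algebra assms(4) by blast
  then show "ultrapower_purely_infinite U TYPE('a)"
    unfolding ultrapower_purely_infinite_def
    using ultrapower_factorisation_if_C_pi_bounded[OF assms(1) \<open>K > 0\<close> bound] by blast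
qed

end
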